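(* Suppose $0<1/n\ll \nu\ll \tau,\varepsilon<1$ and let $G$ be a digraph on $n$ vertices with $\delta^0(G)\geq n/2$. Then $G$ is $\varepsilon$-extremal or $G$ is a robust $(\nu,\tau)$-outexpander.
   Context: Digraphs have no loops and at most one edge in each direction between two vertices; $\delta^0(G)$ is the minimum over vertices of the minimum of in- and outdegree. For $X,Y\subseteq V(G)$, $E(X,Y)$ is the set of edges $xy$ with $x\in X$, $y\in Y$ and $e(X,Y)=|E(X,Y)|$. For $0<\nu\leq\tau<1$ and $S\subseteq V(G)$, the $\nu$-robust outneighbourhood $RN^+_{\nu,G}(S)$ is the set of vertices of $G$ having at least $\nu n$ inneighbours in $S$; $G$ is a robust $(\nu,\tau)$-outexpander if $|RN^+_{\nu,G}(S)|\geq |S|+\nu n$ for all $S\subseteq V(G)$ with $\tau n<|S|<(1-\tau)n$. $G$ is $\varepsilon$-extremal if there is a partition $A,B,S,T$ of $V(G)$ with sizes $a,b,s,t$ such that $|a-b|,|s-t|\leq 1$ and $e(A\cup S,A\cup T)<\varepsilon n^2$. The hierarchy notation $\alpha\ll\beta$ means the statement holds whenever $\alpha$ is sufficiently small as a function of $\beta$ (constants chosen from right to left); here $1/n\ll\nu\ll \tau,\varepsilon$ means $\nu$ is sufficiently small relative to $\tau$ and $\varepsilon$, and $n$ sufficiently large relative to $\nu$. *)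

theory Defs
  imports Main "HOL.Real"
begin

text \<open>A digraph is a finite vertex set V with an edge relation E \<subseteq> V \<times> V without loops.
  Using a set of ordered pairs gives at most one edge in each direction.\<close>
definition digraph :: "'a set \<Rightarrow> ('a \<times> 'a) set \<Rightarrow> bool" where
  "digraph V E \<longleftrightarrow> finite V \<and> E \<subseteq> V \<times> V \<and> (\<forall>v. (v, v) \<notin> E)"

definition outnbrs :: "('a \<times> 'a) set \<Rightarrow> 'a \<Rightarrow> 'a set" where
  "outnbrs E v = {u. (v, u) \<in> E}"

definition innbrs :: "('a \<times> 'a) set \<Rightarrow> 'a \<Rightarrow> 'a set" where
  "innbrs E v = {u. (u, v) \<in> E}"

definition min_semidegree :: "'a set \<Rightarrow> ('a \<times> 'a) set \<Rightarrow> nat" where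
  "min_semidegree V E = Min ((\<lambda>v. min (card (outnbrs E v)) (card (innbrs E v))) ` V)"

definition edges_between :: "('a \<times> 'a) set \<Rightarrow> 'a set \<Rightarrow> 'a set \<Rightarrow> nat" where
  "edges_between E X Y = card (E \<inter> (X \<times> Y))"

definition robust_outnbhd :: "'a set \<Rightarrow> ('a \<times> 'a) set \<Rightarrow> real \<Rightarrow> 'a set \<Rightarrow> 'a set" where
  "robust_outnbhd V E \<nu> S = {v \<in> V. real (card (innbrs E v \<inter> S)) \<ge> \<nu> * real (card V)}"

definition robust_outexpander :: "'a set \<Rightarrow> ('a \<times> 'a) set \<Rightarrow> real \<Rightarrow> real \<Rightarrow> bool" where
  "robust_outexpander V E \<nu> \<tau> \<longleftrightarrow>
     (\<forall>S. S \<subseteq> V \<longrightarrow> \<tau> * real (card V) < real (card S) \<longrightarrow> real (card S) < (1 - \<tau>) * real (card V) \<longrightarrow>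
        real (card (robust_outnbhd V E \<nu> S)) \<ge> real (card S) + \<nu> * real (card V))"

definition extremal :: "'a set \<Rightarrow> ('a \<times> 'a) set \<Rightarrow> real \<Rightarrow> bool" where
  "extremal V E \<epsilon> \<longleftrightarrow>
     (\<exists>A B S T. A \<union> B \<union> S \<union> T = V \<and>
        A \<inter> B = {} \<and> A \<inter> S = {} \<and> A \<inter> T = {} \<and> B \<inter> S = {} \<and> B \<inter> T = {} \<and> S \<inter> T = {} \<and>
        \<bar>int (card A) - int (card B)\<bar> \<le> 1 \<and> \<bar>int (card S) - int (card T)\<bar> \<le> 1 \<and>
        real (edges_between E (A \<union> S) (A \<union> T)) < \<epsilon> * real (card V) ^ 2)"

end

theory Submission
  imports Defs
begin

text \<open>Suppose S, with \<tau>n < |S| < (1-\<tau>)n, has a small robust outneighbourhood N = RN(S),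
  i.e. |N| < |S| + \<nu>n, and put Y = V - N. Every vertex of Y has fewer than \<nu>n inneighbours
  in S, so e(S,Y) \<le> \<nu>n^2. Since Y is non-empty and indegrees are at least n/2, this gives
  |S| \<le> n/2 + \<nu>n; since every vertex of S sends at least n/2 - |N| edges into Y, it gives
  |N| \<ge> n/2 - \<nu>n/\<tau>. So S and Y differ in only O(\<nu>n/\<tau>) vertices from sets X, Y' of sizes
  \<lceil>n/2\<rceil> and \<lfloor>n/2\<rfloor>, whence e(X,Y') \<le> n/2 + O(\<nu>n^2/\<tau>) < \<epsilon>n^2, and the parts
  X \<inter> Y', V - (X \<union> Y'), X - Y', Y' - X witness \<epsilon>-extremality.\<close>

lemma outnbrs_subset: "digraph V E \<Longrightarrow> outnbrs E v \<subseteq> V"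
  unfolding digraph_def outnbrs_def by auto

lemma innbrs_subset: "digraph V E \<Longrightarrow> innbrs E v \<subseteq> V"
  unfolding digraph_def innbrs_def by auto

lemma edges_between_eq_sum_outnbrs:
  assumes G: "digraph V E" and "X \<subseteq> V"
  shows "edges_between E X Y = (\<Sum>x\<in>X. card (outnbrs E x \<inter> Y))"
proof -
  have "E \<inter> (X \<times> Y) = (SIGMA x:X. outnbrs E x \<inter> Y)"
    unfolding outnbrs_def by auto
  moreover have "finite V"
    using G by (simp add: digraph_def)
  then have "finite X" "\<And>x. finite (outnbrs E x \<inter> Y)"
    using assms(2) outnbrs_subset[OF G] by (meson finite_Int finite_subset)+
  ultimately show ?thesis
    unfolding edges_between_def by simp
qed

lemma edges_between_eq_sum_innbrs:
  assumes G: "digraph V E" and "Y \<subseteq> V"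
  shows "edges_between E X Y = (\<Sum>y\<in>Y. card (innbrs E y \<inter> X))"
proof -
  have "E \<inter> (X \<times> Y) = prod.swap ` (SIGMA y:Y. innbrs E y \<inter> X)"
    unfolding innbrs_def by force
  moreover have "finite V"
    using G by (simp add: digraph_def)
  then have "finite Y" "\<And>y. finite (innbrs E y \<inter> X)"
    using assms(2) innbrs_subset[OF G] by (meson finite_Int finite_subset)+
  ultimately show ?thesis
    unfolding edges_between_def by (simp add: card_image)
qed

lemma edges_between_le_of_diff:
  assumes G: "digraph V E" and "X' \<subseteq> V" "Y' \<subseteq> V"
  shows "edges_between E X' Y'
           \<le> edges_between E X Y + card (X' - X) * card V + card (Y' - Y) * card V"
proof -
  have fin: "finite V" and EV: "E \<subseteq> V \<times> V"
    using G unfolding digraph_def by auto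
  let ?U = "E \<inter> (X \<times> Y) \<union> (X' - X) \<times> V \<union> V \<times> (Y' - Y)"
  have "E \<inter> (X' \<times> Y') \<subseteq> ?U"
    using EV by auto
  moreover have "finite ?U"
    using fin EV assms(2,3) by (meson finite_Diff finite_Int finite_SigmaI finite_Un finite_subset)
  ultimately have "card (E \<inter> (X' \<times> Y')) \<le> card ?U"
    by (rule card_mono[rotated])
  also have "\<dots> \<le> card (E \<inter> (X \<times> Y)) + card ((X' - X) \<times> V) + card (V \<times> (Y' - Y))"
    by (meson card_Un_le add_le_mono order_trans le_refl)
  finally show ?thesis
    unfolding edges_between_def by (simp add: card_cartesian_product mult.commute)
qed

lemma obtain_subset_card_diff_le:
  assumes "finite V" "X \<subseteq> V" "k \<le> card V"
  obtains X' where "X' \<subseteq> V" "card X' = k" "card (X' - X) \<le> k - card X"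
proof (cases "k \<le> card X")
  case True
  then obtain X' where "X' \<subseteq> X" "card X' = k"
    by (metis obtain_subset_with_card_n)
  moreover have "card (X' - X) = 0"
    using \<open>X' \<subseteq> X\<close> by (metis Diff_eq_empty_iff card.empty)
  ultimately show ?thesis
    using assms(2) that[of X'] by auto
next
  case False
  have "finite X"
    using assms(1,2) finite_subset by blast
  then have "k - card X \<le> card (V - X)"
    using assms by (simp add: card_Diff_subset)
  then obtain W where W: "W \<subseteq> V - X" "card W = k - card X"
    by (metis obtain_subset_with_card_n)
  then have "card (X \<union> W) = k"
    using False \<open>finite X\<close> assms(1) by (subst card_Un_disjoint) (auto intro: finite_subset)
  moreover have "X \<union> W - X = W"
    using W by auto
  ultimately show ?thesis
    using that[of "X \<union> W"] W assms(2) by auto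
qed

lemma extremal_of_sparse_halves:
  assumes "finite V" "X \<subseteq> V" "Y \<subseteq> V"
    and "card X = card V - card V div 2" "card Y = card V div 2"
    and "real (edges_between E X Y) < \<epsilon> * real (card V) ^ 2"
  shows "extremal V E \<epsilon>"
proof -
  define A where "A = X \<inter> Y"
  define S where "S = X - Y"
  define T where "T = Y - X"
  define B where "B = V - (X \<union> Y)"
  have fin: "finite X" "finite Y"
    using assms(1-3) finite_subset by auto
  have "card X = card A + card S" "card Y = card A + card T"
    unfolding A_def S_def T_def
    using card_Int_Diff[OF fin(1), of Y] card_Int_Diff[OF fin(2), of X] by (simp_all add: Int_commute)
  moreover have "card X + card Y = card (X \<union> Y) + card A"
    unfolding A_def using card_Un_Int fin by blast
  moreover have "card B = card V - card (X \<union> Y)" "card (X \<union> Y) \<le> card V"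
    unfolding B_def using assms(1-3) fin by (simp_all add: card_Diff_subset card_mono)
  ultimately have "card B = card A" "card T \<le> card S" "card S \<le> card T + 1"
    using assms(4,5) by linarith+
  then have "\<bar>int (card A) - int (card B)\<bar> \<le> 1" "\<bar>int (card S) - int (card T)\<bar> \<le> 1"
    by auto
  moreover have "A \<union> S = X" "A \<union> T = Y" "A \<union> B \<union> S \<union> T = V"
    unfolding A_def S_def T_def B_def using assms(2,3) by auto
  moreover have "A \<inter> B = {} \<and> A \<inter> S = {} \<and> A \<inter> T = {} \<and> B \<inter> S = {} \<and> B \<inter> T = {} \<and> S \<inter> T = {}"
    unfolding A_def S_def T_def B_def by auto
  ultimately show ?thesis
    unfolding extremal_def using assms(6)
    by (intro exI[of _ A] exI[of _ B] exI[of _ S] exI[of _ T]) simp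
qed

lemma min_semidegree_le:
  assumes "finite V" "v \<in> V"
  shows "min_semidegree V E \<le> card (outnbrs E v)" "min_semidegree V E \<le> card (innbrs E v)"
proof -
  have "min_semidegree V E \<le> min (card (outnbrs E v)) (card (innbrs E v))"
    unfolding min_semidegree_def using assms by (intro Min_le) auto
  then show "min_semidegree V E \<le> card (outnbrs E v)" "min_semidegree V E \<le> card (innbrs E v)"
    by auto
qed

lemma edges_to_outside_robust_outnbhd_le:
  assumes G: "digraph V E" and "0 \<le> \<nu>"
  shows "real (edges_between E S (V - robust_outnbhd V E \<nu> S)) \<le> \<nu> * real (card V) ^ 2"
proof -
  define Y where "Y = V - robust_outnbhd V E \<nu> S"
  have "card Y \<le> card V"
    unfolding Y_def using G by (simp add: card_mono digraph_def)
  have "real (edges_between E S Y) = (\<Sum>y\<in>Y. real (card (innbrs E y \<inter> S)))"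
    using edges_between_eq_sum_innbrs[OF G, of Y] by (simp add: Y_def)
  also have "\<dots> \<le> (\<Sum>y\<in>Y. \<nu> * real (card V))"
    by (rule sum_mono) (auto simp: Y_def robust_outnbhd_def)
  also have "\<dots> \<le> real (card V) * (\<nu> * real (card V))"
    using \<open>card Y \<le> card V\<close> assms(2) by (simp add: mult_right_mono)
  finally show ?thesis
    unfolding Y_def by (simp add: power2_eq_square mult_ac)
qed

lemma card_add_indegree_lt_of_not_robust_outnbr:
  assumes G: "digraph V E" and "S \<subseteq> V" "y \<in> V - robust_outnbhd V E \<nu> S"
  shows "real (card S) + real (card (innbrs E y)) < real (card V) + \<nu> * real (card V)"
proof -
  have fin: "finite V"
    using G by (simp add: digraph_def)
  have "innbrs E y \<subseteq> (innbrs E y \<inter> S) \<union> (V - S)"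
    using innbrs_subset[OF G] by auto
  then have "card (innbrs E y) \<le> card ((innbrs E y \<inter> S) \<union> (V - S))"
    using fin assms(2) by (intro card_mono) (auto intro: finite_subset)
  also have "\<dots> \<le> card (innbrs E y \<inter> S) + card (V - S)"
    by (rule card_Un_le)
  also have "card (V - S) = card V - card S"
    using fin assms(2) by (simp add: card_Diff_subset finite_subset)
  finally have "real (card (innbrs E y)) \<le> real (card (innbrs E y \<inter> S)) + real (card V) - real (card S)"
    using card_mono[OF fin assms(2)] by simp
  moreover have "real (card (innbrs E y \<inter> S)) < \<nu> * real (card V)"
    using assms(3) by (auto simp: robust_outnbhd_def)
  ultimately show ?thesis
    by linarith
qed

lemma card_mult_le_edges_to_outside:
  assumes G: "digraph V E" and "S \<subseteq> V" "N \<subseteq> V"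
    and outdeg: "\<And>x. x \<in> S \<Longrightarrow> d \<le> real (card (outnbrs E x))"
  shows "real (card S) * (d - real (card N)) \<le> real (edges_between E S (V - N))"
proof -
  have fin: "finite V"
    using G by (simp add: digraph_def)
  have "d - real (card N) \<le> real (card (outnbrs E x \<inter> (V - N)))" if "x \<in> S" for x
  proof -
    have "outnbrs E x \<subseteq> N \<union> (outnbrs E x \<inter> (V - N))"
      using outnbrs_subset[OF G] by auto
    then have "card (outnbrs E x) \<le> card (N \<union> (outnbrs E x \<inter> (V - N)))"
      using fin assms(3) by (intro card_mono) (auto intro: finite_subset)
    also have "\<dots> \<le> card N + card (outnbrs E x \<inter> (V - N))"
      by (rule card_Un_le)
    finally show ?thesis
      using outdeg[OF that] by linarith
  qed
  then have "(\<Sum>x\<in>S. d - real (card N)) \<le> (\<Sum>x\<in>S. real (card (outnbrs E x \<inter> (V - N))))"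
    by (rule sum_mono)
  then show ?thesis
    using edges_between_eq_sum_outnbrs[OF G assms(2)] by simp
qed

lemma nonexpanding_set_bounds:
  assumes G: "digraph V E"
    and deg: "\<And>v. v \<in> V \<Longrightarrow> real (card V) / 2 \<le> real (card (outnbrs E v))
                         \<and> real (card V) / 2 \<le> real (card (innbrs E v))"
    and "0 < \<nu>" "\<nu> \<le> \<tau>"
    and S: "S \<subseteq> V" "\<tau> * real (card V) < real (card S)" "real (card S) < (1 - \<tau>) * real (card V)"
    and N: "N = robust_outnbhd V E \<nu> S" "real (card N) < real (card S) + \<nu> * real (card V)"
  shows "real (card S) \<le> real (card V) / 2 + \<nu> * real (card V)"
    and "real (card V) / 2 - \<nu> * real (card V) / \<tau> \<le> real (card N)"
proof -
  let ?n = "real (card V)"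
  have "0 < \<tau>"
    using assms(3,4) by linarith
  have "N \<subseteq> V"
    using N(1) by (auto simp: robust_outnbhd_def)
  have "\<nu> * ?n \<le> \<tau> * ?n"
    using assms(4) by (simp add: mult_right_mono)
  then have "card N < card V"
    using N(2) S(3) by (simp add: algebra_simps)
  then have "N \<noteq> V"
    by auto
  then obtain y where "y \<in> V - N"
    using \<open>N \<subseteq> V\<close> by blast
  then show "real (card S) \<le> ?n / 2 + \<nu> * ?n"
    using card_add_indegree_lt_of_not_robust_outnbr[OF G S(1)] deg[of y] N(1) by fastforce
  have "real (card S) * (?n / 2 - real (card N)) \<le> real (edges_between E S (V - N))"
    using card_mult_le_edges_to_outside[OF G S(1) \<open>N \<subseteq> V\<close>] deg S(1) by blast
  also have "\<dots> \<le> \<nu> * ?n ^ 2"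
    using edges_to_outside_robust_outnbhd_le[OF G, of \<nu> S] N(1) assms(3) by simp
  finally have sparse: "real (card S) * (?n / 2 - real (card N)) \<le> \<nu> * ?n ^ 2" .
  show "?n / 2 - \<nu> * ?n / \<tau> \<le> real (card N)"
  proof (rule ccontr)
    assume "\<not> ?thesis"
    then have gap: "\<nu> * ?n / \<tau> < ?n / 2 - real (card N)"
      by linarith
    have "card V \<noteq> 0"
      using S(3) by (cases "card V") auto
    then have "0 < \<tau> * ?n"
      using \<open>0 < \<tau>\<close> by simp
    then have "\<tau> * ?n * (\<nu> * ?n / \<tau>) < real (card S) * (?n / 2 - real (card N))"
      using gap S(2) assms(3) \<open>0 < \<tau>\<close> by (intro mult_strict_mono) auto
    also have "\<tau> * ?n * (\<nu> * ?n / \<tau>) = \<nu> * ?n ^ 2"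
      using \<open>0 < \<tau> * ?n\<close> by (auto simp: power2_eq_square field_simps)
    finally show False
      using sparse by linarith
  qed
qed

lemma sparse_halves_of_nonexpanding_set:
  assumes G: "digraph V E"
    and deg: "\<And>v. v \<in> V \<Longrightarrow> real (card V) / 2 \<le> real (card (outnbrs E v))
                         \<and> real (card V) / 2 \<le> real (card (innbrs E v))"
    and "0 < \<nu>" "\<nu> \<le> \<tau>" "\<tau> \<le> 1"
    and S: "S \<subseteq> V" "\<tau> * real (card V) < real (card S)" "real (card S) < (1 - \<tau>) * real (card V)"
    and nonexpanding: "real (card (robust_outnbhd V E \<nu> S)) < real (card S) + \<nu> * real (card V)"
  obtains X Y where "X \<subseteq> V" "Y \<subseteq> V" "card X = card V - card V div 2" "card Y = card V div 2"
    "real (edges_between E X Y) \<le> real (card V) / 2 + 5 * \<nu> / \<tau> * real (card V) ^ 2"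
proof -
  let ?n = "real (card V)"
  define N where "N = robust_outnbhd V E \<nu> S"
  note N_small = nonexpanding[folded N_def]
  note bounds = nonexpanding_set_bounds[OF G deg assms(3,4) S N_def N_small]
  have fin: "finite V"
    using G by (simp add: digraph_def)
  have "N \<subseteq> V"
    by (auto simp: N_def robust_outnbhd_def)
  then have card_outside: "real (card (V - N)) = ?n - real (card N)"
    using fin by (simp add: card_Diff_subset finite_subset card_mono)
  obtain X where X: "X \<subseteq> V" "card X = card V - card V div 2"
    "card (X - S) \<le> (card V - card V div 2) - card S"
    using obtain_subset_card_diff_le[OF fin S(1), of "card V - card V div 2"] by auto
  obtain Y where Y: "Y \<subseteq> V" "card Y = card V div 2"
    "card (Y - (V - N)) \<le> card V div 2 - card (V - N)"
    using obtain_subset_card_diff_le[OF fin Diff_subset, of "card V div 2" N] by auto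
  have real_diff: "real (a - b) \<le> max 0 (real a - real b)" for a b
    by (simp add: of_nat_diff_if)
  have "real (card V - card V div 2) \<le> ?n / 2 + 1 / 2" "real (card V div 2) \<le> ?n / 2"
    by linarith+
  moreover have "0 \<le> \<nu> * ?n / \<tau>"
    using assms(3,4) by simp
  moreover have "real (card (X - S)) \<le> max 0 (real (card V - card V div 2) - real (card S))"
    "real (card (Y - (V - N))) \<le> max 0 (real (card V div 2) - real (card (V - N)))"
    using of_nat_mono[OF X(3)] of_nat_mono[OF Y(3)] real_diff by (meson order_trans)+
  ultimately have diff_X: "real (card (X - S)) \<le> 1 / 2 + \<nu> * ?n / \<tau> + \<nu> * ?n"
    and diff_Y: "real (card (Y - (V - N))) \<le> 2 * \<nu> * ?n"
    using bounds N_small card_outside assms(3) by (simp_all add: max_def split: if_splits)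
  have "real (edges_between E X Y)
          \<le> real (edges_between E S (V - N)) + real (card (X - S)) * ?n + real (card (Y - (V - N))) * ?n"
    using edges_between_le_of_diff[OF G X(1) Y(1), of S "V - N"] by (simp flip: of_nat_mult of_nat_add)
  also have "\<dots> \<le> \<nu> * ?n ^ 2 + (1 / 2 + \<nu> * ?n / \<tau> + \<nu> * ?n) * ?n + 2 * \<nu> * ?n * ?n"
    using edges_to_outside_robust_outnbhd_le[OF G, of \<nu> S] assms(3) diff_X diff_Y
    unfolding N_def by (intro add_mono mult_right_mono) auto
  also have "\<dots> = ?n / 2 + (4 + 1 / \<tau>) * \<nu> * ?n ^ 2"
    using assms(3,4) by (simp add: field_simps power2_eq_square)
  also have "\<dots> \<le> ?n / 2 + 5 * \<nu> / \<tau> * ?n ^ 2"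
    using assms(3-5) by (intro add_left_mono mult_right_mono) (auto simp: field_simps)
  finally show ?thesis
    using that X(1,2) Y(1,2) by blast
qed

lemma extremal_or_robust_outexpander:
  assumes G: "digraph V E" and deg: "real (card V) / 2 \<le> real (min_semidegree V E)"
    and "0 < \<tau>" "\<tau> \<le> 1" "0 < \<nu>" "\<nu> \<le> \<epsilon> * \<tau> / 10" "0 < \<epsilon>" "\<epsilon> \<le> 1"
    and large: "1 / \<epsilon> < real (card V)"
  shows "extremal V E \<epsilon> \<or> robust_outexpander V E \<nu> \<tau>"
proof (rule disjCI)
  let ?n = "real (card V)"
  assume "\<not> robust_outexpander V E \<nu> \<tau>"
  then obtain S where S: "S \<subseteq> V" "\<tau> * ?n < real (card S)" "real (card S) < (1 - \<tau>) * ?n"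
    "real (card (robust_outnbhd V E \<nu> S)) < real (card S) + \<nu> * ?n"
    unfolding robust_outexpander_def by auto
  have fin: "finite V"
    using G by (simp add: digraph_def)
  have "\<epsilon> * \<tau> / 10 \<le> \<tau>"
    using assms(3,8) by (simp add: mult_le_cancel_right1)
  then have "\<nu> \<le> \<tau>"
    using assms(6) by linarith
  have "\<And>v. v \<in> V \<Longrightarrow> ?n / 2 \<le> real (card (outnbrs E v)) \<and> ?n / 2 \<le> real (card (innbrs E v))"
    using deg min_semidegree_le[OF fin] by (meson of_nat_mono order_trans)
  then obtain X Y where XY: "X \<subseteq> V" "Y \<subseteq> V" "card X = card V - card V div 2" "card Y = card V div 2"
    "real (edges_between E X Y) \<le> ?n / 2 + 5 * \<nu> / \<tau> * ?n ^ 2"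
    using sparse_halves_of_nonexpanding_set[OF G _ assms(5) \<open>\<nu> \<le> \<tau>\<close> assms(4) S] by blast
  have "5 * \<nu> / \<tau> \<le> \<epsilon> / 2"
    using assms(3,6) by (simp add: field_simps)
  then have coeff: "5 * \<nu> / \<tau> * ?n ^ 2 \<le> \<epsilon> / 2 * ?n ^ 2"
    by (intro mult_right_mono) auto
  have "0 < 1 / \<epsilon>"
    using assms(7) by simp
  then have "0 < ?n"
    using large by linarith
  then have "?n / 2 * 1 < ?n / 2 * (\<epsilon> * ?n)"
    using large assms(7) by (intro mult_strict_left_mono) (simp_all add: field_simps)
  then have "?n / 2 < \<epsilon> / 2 * ?n ^ 2"
    by (simp add: power2_eq_square mult_ac)
  then have "real (edges_between E X Y) < \<epsilon> * ?n ^ 2"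
    using XY(5) coeff by linarith
  then show "extremal V E \<epsilon>"
    using extremal_of_sparse_halves[OF fin XY(1-4)] by blast
qed

theorem lemma4p4:
  "\<forall>\<tau> \<epsilon> :: real. 0 < \<tau> \<and> \<tau> < 1 \<and> 0 < \<epsilon> \<and> \<epsilon> < 1 \<longrightarrow>
     (\<exists>\<nu>0 > 0. \<forall>\<nu>. 0 < \<nu> \<and> \<nu> \<le> \<nu>0 \<longrightarrow>
       (\<exists>n0 :: nat. \<forall>(V :: nat set) (E :: (nat \<times> nat) set).
          digraph V E \<and> card V \<ge> n0 \<and> real (min_semidegree V E) \<ge> real (card V) / 2 \<longrightarrow>
          extremal V E \<epsilon> \<or> robust_outexpander V E \<nu> \<tau>))"
proof (intro allI impI)
  fix \<tau> \<epsilon> :: real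
  assume params: "0 < \<tau> \<and> \<tau> < 1 \<and> 0 < \<epsilon> \<and> \<epsilon> < 1"
  show "\<exists>\<nu>0 > 0. \<forall>\<nu>. 0 < \<nu> \<and> \<nu> \<le> \<nu>0 \<longrightarrow>
       (\<exists>n0 :: nat. \<forall>(V :: nat set) (E :: (nat \<times> nat) set).
          digraph V E \<and> card V \<ge> n0 \<and> real (min_semidegree V E) \<ge> real (card V) / 2 \<longrightarrow>
          extremal V E \<epsilon> \<or> robust_outexpander V E \<nu> \<tau>)"
  proof (intro exI[of _ "\<epsilon> * \<tau> / 10"] conjI allI impI exI[of _ "nat \<lfloor>1 / \<epsilon>\<rfloor> + 1"])
    show "0 < \<epsilon> * \<tau> / 10"
      using params by simp
    fix \<nu> :: real and V :: "nat set" and E :: "(nat \<times> nat) set"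
    assume "0 < \<nu> \<and> \<nu> \<le> \<epsilon> * \<tau> / 10"
      and "digraph V E \<and> nat \<lfloor>1 / \<epsilon>\<rfloor> + 1 \<le> card V \<and> real (card V) / 2 \<le> real (min_semidegree V E)"
    then show "extremal V E \<epsilon> \<or> robust_outexpander V E \<nu> \<tau>"
      using params by (intro extremal_or_robust_outexpander) (simp_all, linarith)
  qed
qed

end
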